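(* Let $(P,r,\gamma)$ be a discounted MDP with finite $\mathcal{S},\mathcal{A}$, $r:\mathcal{S}\times\mathcal{A}\to[0,1]$, $\gamma\in(0,1)$, and let $M>0$, $\varepsilon>0$. Define $\mathcal{L}=\mathrm{Clip}_M\circ\mathcal{T}_\gamma$ and run the Span-Constrained Planning algorithm: $V^0=\mathbf 0$, $T=\big\lceil \log(\frac{3}{(1-\gamma)^2\varepsilon})/(1-\gamma)\big\rceil$, $V^{t+1}=\mathcal{L}(V^t)$ for $t=0,\dots,T-1$; choose $\widehat\pi(s)\in\arg\max_a r(s,a)+\gamma P_{sa}V^T$; set $m=\min_sV^T(s)$ and $\tilde r(s,a)=\min\{m+M-\gamma P_{sa}V^T,\ r(s,a)\}$; return $\widehat\pi,V^T,\tilde r$. Then $\mathcal{L}$ is a $\gamma$-contraction in $\|\cdot\|_\infty$ with a unique fixed point $V^\star_{\gamma,M}$, and: 1. $\|V^T-V^\star_{\gamma,M}\|_\infty\le\varepsilon$; 2. $\tilde r\le r$, $\|V^{\widehat\pi}_{\gamma,\tilde r}-V^\star_{\gamma,M}\|_\infty\le\varepsilon$, and $\|V^{\widehat\pi}_{\gamma,\tilde r}\|_{\mathrm{sp}}\le M+2\varepsilon$; 3. for any policy $\pi'$ and reward function $r'\le r$ with $\|V^{\pi'}_{\gamma,r'}\|_{\mathrm{sp}}\le M$, we have $V^\star_{\gamma,M}\ge V^{\pi'}_{\gamma,r'}$ and $V^{\widehat\pi}_\gamma\ge V^{\widehat\pi}_{\gamma,\tilde r}\ge V^\star_{\gamma,M}-\varepsilon\mathbf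 1\ge V^{\pi'}_{\gamma,r'}-\varepsilon\mathbf 1$.
   Context: $\mathcal{T}_\gamma(V)(s)=\max_a\big(r(s,a)+\gamma\sum_{s'}P(s'\mid s,a)V(s')\big)$; $P_{sa}V=\sum_{s'}P(s'\mid s,a)V(s')$. $\mathrm{Clip}_M(V)=\min\{V,(M+\min_{s'}V(s'))\mathbf 1\}$ (elementwise minimum). $V^\pi_{\gamma,r'}(s)=\mathbb{E}^\pi_s[\sum_{t\ge0}\gamma^tr'(S_t,A_t)]$ is the value of $\pi$ in the DMDP $(P,r',\gamma)$ and $V^\pi_\gamma=V^\pi_{\gamma,r}$. $\|x\|_{\mathrm{sp}}=\max_sx(s)-\min_sx(s)$. Inequalities between vectors/functions are elementwise. *)

theory Defs
  imports Complex_Main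
begin

text \<open>Transition kernel P s a s' = probability of moving to s' from s under action a.\<close>

definition stochastic_kernel :: "('s::finite \<Rightarrow> 'a::finite \<Rightarrow> 's \<Rightarrow> real) \<Rightarrow> bool" where
  "stochastic_kernel P \<longleftrightarrow> (\<forall>s a s'. 0 \<le> P s a s') \<and> (\<forall>s a. (\<Sum>s'\<in>UNIV. P s a s') = 1)"

text \<open>A (stationary, possibly randomized) policy: pol s a = probability of action a in state s.\<close>
definition is_policy :: "('s::finite \<Rightarrow> 'a::finite \<Rightarrow> real) \<Rightarrow> bool" where
  "is_policy pol \<longleftrightarrow> (\<forall>s a. 0 \<le> pol s a) \<and> (\<forall>s. (\<Sum>a\<in>UNIV. pol s a) = 1)"

definition det_policy :: "('s \<Rightarrow> 'a) \<Rightarrow> 's \<Rightarrow> 'a \<Rightarrow> real" where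
  "det_policy d s a = (if a = d s then 1 else 0)"

definition Pv :: "('s::finite \<Rightarrow> 'a \<Rightarrow> 's \<Rightarrow> real) \<Rightarrow> 's \<Rightarrow> 'a \<Rightarrow> ('s \<Rightarrow> real) \<Rightarrow> real" where
  "Pv P s a V = (\<Sum>s'\<in>UNIV. P s a s' * V s')"

text \<open>exp_reward P pol r t s = E^pi_s [ r(S_t, A_t) ].\<close>
fun exp_reward :: "('s::finite \<Rightarrow> 'a::finite \<Rightarrow> 's \<Rightarrow> real) \<Rightarrow> ('s \<Rightarrow> 'a \<Rightarrow> real) \<Rightarrow> ('s \<Rightarrow> 'a \<Rightarrow> real) \<Rightarrow> nat \<Rightarrow> 's \<Rightarrow> real" where
  "exp_reward P pol r 0 s = (\<Sum>a\<in>UNIV. pol s a * r s a)"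
| "exp_reward P pol r (Suc t) s = (\<Sum>a\<in>UNIV. pol s a * (\<Sum>s'\<in>UNIV. P s a s' * exp_reward P pol r t s'))"

definition policy_value :: "('s::finite \<Rightarrow> 'a::finite \<Rightarrow> 's \<Rightarrow> real) \<Rightarrow> real \<Rightarrow> ('s \<Rightarrow> 'a \<Rightarrow> real) \<Rightarrow> ('s \<Rightarrow> 'a \<Rightarrow> real) \<Rightarrow> 's \<Rightarrow> real" where
  "policy_value P \<gamma> r pol s = (\<Sum>t. \<gamma> ^ t * exp_reward P pol r t s)"

definition bellman :: "('s::finite \<Rightarrow> 'a::finite \<Rightarrow> 's \<Rightarrow> real) \<Rightarrow> ('s \<Rightarrow> 'a \<Rightarrow> real) \<Rightarrow> real \<Rightarrow> ('s \<Rightarrow> real) \<Rightarrow> 's \<Rightarrow> real" where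
  "bellman P r \<gamma> V s = Max (range (\<lambda>a. r s a + \<gamma> * Pv P s a V))"

definition clip :: "real \<Rightarrow> ('s::finite \<Rightarrow> real) \<Rightarrow> 's \<Rightarrow> real" where
  "clip M V s = min (V s) (M + Min (range V))"

definition sup_norm :: "('s::finite \<Rightarrow> real) \<Rightarrow> real" where
  "sup_norm V = Max (range (\<lambda>s. \<bar>V s\<bar>))"

definition sp_norm :: "('s::finite \<Rightarrow> real) \<Rightarrow> real" where
  "sp_norm V = Max (range V) - Min (range V)"

end

theory Submission
  imports Defs
begin

text \<open>The clipped Bellman operator \<open>L = clip M \<circ> bellman P r \<gamma>\<close> is a monotone \<open>\<gamma>\<close>-contraction in
  the sup norm: the Bellman operator is one, and clipping is monotone and nonexpansive. Banach's
  argument gives its fixed point \<open>V\<^sup>*\<close>, and the a posteriori bound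
  \<open>(1 - \<gamma>) ||V - V\<^sup>*|| \<le> ||L V - V||\<close> controls every approximation by its residual, which after
  \<open>T\<close> iterations from \<open>0\<close> is at most \<open>\<gamma>\<^sup>T\<close>. Evaluating the truncated reward along the greedy
  policy is again a \<open>\<gamma>\<close>-contraction, and its residual at \<open>V\<^sup>T\<close> is at most twice that of \<open>L\<close>, so
  the same bound places the value of the returned policy within \<open>\<epsilon>\<close> of \<open>V\<^sup>*\<close>. Finally, the value
  of a policy with reward below \<open>r\<close> and span at most \<open>M\<close> satisfies \<open>V \<le> L V\<close>, and such a
  subsolution of a monotone contraction lies below its fixed point.\<close>

section \<open>Sup norm and span\<close>

lemma abs_le_sup_norm: "\<bar>V s\<bar> \<le> sup_norm (V :: 's::finite \<Rightarrow> real)"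
  unfolding sup_norm_def by (rule Max_ge) auto

lemma sup_norm_leI: "(\<And>s. \<bar>V s\<bar> \<le> c) \<Longrightarrow> sup_norm (V :: 's::finite \<Rightarrow> real) \<le> c"
  unfolding sup_norm_def by (subst Max_le_iff) auto

lemma abs_diff_le_sup_norm: "\<bar>V s - W s\<bar> \<le> sup_norm (V - W :: 's::finite \<Rightarrow> real)"
  using abs_le_sup_norm[of "V - W" s] by simp

lemma sup_norm_nonneg: "0 \<le> sup_norm (V :: 's::finite \<Rightarrow> real)"
  using abs_le_sup_norm[of V] abs_ge_zero order_trans by blast

lemma sup_norm_minus_commute: "sup_norm (V - W) = sup_norm (W - V :: 's::finite \<Rightarrow> real)"
  by (simp add: sup_norm_def abs_minus_commute)

lemma sup_norm_triangle:
  "sup_norm (U - W) \<le> sup_norm (U - V) + sup_norm (V - W :: 's::finite \<Rightarrow> real)"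
proof (rule sup_norm_leI)
  fix s
  show "\<bar>(U - W) s\<bar> \<le> sup_norm (U - V) + sup_norm (V - W)"
    using abs_diff_le_sup_norm[of U s V] abs_diff_le_sup_norm[of V s W] by simp
qed

lemma sup_norm_le_0_imp_eq:
  assumes "sup_norm (V - W) \<le> 0"
  shows "V = (W :: 's::finite \<Rightarrow> real)"
proof
  fix s
  show "V s = W s" using abs_diff_le_sup_norm[of V s W] assms by linarith
qed

lemma Min_range_le: "Min (range V) \<le> (V :: 's::finite \<Rightarrow> 'b::linorder) s"
  by (rule Min_le) auto

lemma Max_range_ge: "(V :: 's::finite \<Rightarrow> 'b::linorder) s \<le> Max (range V)"
  by (rule Max_ge) auto

lemma Min_range_attained: "\<exists>s. Min (range V) = (V :: 's::finite \<Rightarrow> 'b::linorder) s"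
  using Min_in[of "range V"] by fastforce

lemma Max_range_attained: "\<exists>s. Max (range V) = (V :: 's::finite \<Rightarrow> 'b::linorder) s"
  using Max_in[of "range V"] by fastforce

lemma Min_range_mono: "V \<le> W \<Longrightarrow> Min (range V) \<le> Min (range (W :: 's::finite \<Rightarrow> 'b::linorder))"
  using Min_range_attained[of W] Min_range_le[of V] le_funD order_trans by metis

lemma Min_range_le_diff:
  "\<bar>Min (range V) - Min (range W)\<bar> \<le> sup_norm (V - W :: 's::finite \<Rightarrow> real)"
proof -
  have "Min (range W) \<le> Min (range V) + sup_norm (V - W)" for V W :: "'s \<Rightarrow> real"
  proof -
    obtain s where "Min (range V) = V s" using Min_range_attained by blast
    then show ?thesis using Min_range_le[of W s] abs_diff_le_sup_norm[of V s W] by linarith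
  qed
  from this[of V W] this[of W V] show ?thesis
    unfolding sup_norm_minus_commute[of W V] abs_diff_le_iff by linarith
qed

lemma Max_range_le_diff:
  "Max (range V) \<le> Max (range W) + sup_norm (V - W :: 's::finite \<Rightarrow> real)"
proof -
  obtain s where "Max (range V) = V s" using Max_range_attained by blast
  then show ?thesis using Max_range_ge[of W s] abs_diff_le_sup_norm[of V s W] by linarith
qed

lemma sp_norm_le_diff: "sp_norm V \<le> sp_norm W + 2 * sup_norm (V - W :: 's::finite \<Rightarrow> real)"
  using Max_range_le_diff[of V W] Min_range_le_diff[of V W] unfolding sp_norm_def by linarith

section \<open>Contractions in the sup norm\<close>

definition sup_norm_lipschitz :: "real \<Rightarrow> (('s::finite \<Rightarrow> real) \<Rightarrow> 's \<Rightarrow> real) \<Rightarrow> bool" where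
  "sup_norm_lipschitz c F \<longleftrightarrow> (\<forall>V W. sup_norm (F V - F W) \<le> c * sup_norm (V - W))"

lemma sup_norm_lipschitzD:
  "sup_norm_lipschitz c F \<Longrightarrow> sup_norm (F V - F W) \<le> c * sup_norm (V - W)"
  by (simp add: sup_norm_lipschitz_def)

lemma sup_norm_lipschitz_comp:
  assumes "sup_norm_lipschitz a F" "sup_norm_lipschitz b G" "0 \<le> a"
  shows "sup_norm_lipschitz (a * b) (F \<circ> G)"
  unfolding sup_norm_lipschitz_def
proof (intro allI)
  fix V W
  have "sup_norm (F (G V) - F (G W)) \<le> a * sup_norm (G V - G W)"
    using assms(1) by (rule sup_norm_lipschitzD)
  also have "\<dots> \<le> a * (b * sup_norm (V - W))"
    using assms(2,3) by (intro mult_left_mono sup_norm_lipschitzD)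
  finally show "sup_norm ((F \<circ> G) V - (F \<circ> G) W) \<le> a * b * sup_norm (V - W)" by simp
qed

lemma sup_norm_lipschitz_funpow:
  assumes "sup_norm_lipschitz c F" "0 \<le> c"
  shows "sup_norm_lipschitz (c ^ n) (F ^^ n)"
proof (induction n)
  case 0
  show ?case by (simp add: sup_norm_lipschitz_def)
next
  case (Suc n)
  then show ?case using sup_norm_lipschitz_comp[OF assms(1) Suc assms(2)] by (simp add: o_def)
qed

lemma sup_norm_lipschitz_fixpoint_dist:
  assumes "sup_norm_lipschitz c F" "F V = V"
  shows "(1 - c) * sup_norm (V - W) \<le> sup_norm (F W - W)"
proof -
  have "sup_norm (V - W) \<le> sup_norm (F V - F W) + sup_norm (F W - W)"
    using sup_norm_triangle[of "F V" W "F W"] assms(2) by simp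
  then show ?thesis using sup_norm_lipschitzD[OF assms(1), of V W] by (simp add: algebra_simps)
qed

lemma sup_norm_lipschitz_funpow_displacement:
  assumes "sup_norm_lipschitz c F" "0 \<le> c" "c < 1"
  shows "(1 - c) * sup_norm ((F ^^ k) V - V) \<le> sup_norm (F V - V)"
proof (induction k)
  case 0
  then show ?case using sup_norm_nonneg[of "F V - V"] by (simp add: sup_norm_def)
next
  case (Suc k)
  have "sup_norm ((F ^^ Suc k) V - V) \<le> sup_norm (F ((F ^^ k) V) - F V) + sup_norm (F V - V)"
    using sup_norm_triangle by simp
  also have "\<dots> \<le> c * sup_norm ((F ^^ k) V - V) + sup_norm (F V - V)"
    using sup_norm_lipschitzD[OF assms(1)] by simp
  finally have "(1 - c) * sup_norm ((F ^^ Suc k) V - V)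
      \<le> (1 - c) * (c * sup_norm ((F ^^ k) V - V) + sup_norm (F V - V))"
    using assms(3) by (intro mult_left_mono) auto
  also have "\<dots> = c * ((1 - c) * sup_norm ((F ^^ k) V - V)) + (1 - c) * sup_norm (F V - V)"
    by (simp add: algebra_simps)
  also have "\<dots> \<le> c * sup_norm (F V - V) + (1 - c) * sup_norm (F V - V)"
    by (rule add_right_mono[OF mult_left_mono[OF Suc assms(2)]])
  also have "\<dots> = sup_norm (F V - V)"
    by (simp add: left_diff_distrib)
  finally show ?case .
qed

lemma convergent_geometric_increments:
  fixes x :: "nat \<Rightarrow> real"
  assumes x: "\<And>n. \<bar>x (Suc n) - x n\<bar> \<le> K * c ^ n" and c: "0 \<le> c" "c < 1"
  shows "convergent x"
proof -
  have "summable (\<lambda>n. K * c ^ n)"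
    using c by (intro summable_mult summable_geometric) simp
  then have "summable (\<lambda>n. x (Suc n) - x n)"
    by (rule summable_comparison_test') (use x in simp)
  then have "convergent (\<lambda>n. \<Sum>i<n. x (Suc i) - x i)"
    by (rule convergentI[OF summable_LIMSEQ])
  then have "convergent (\<lambda>n. x 0 + (\<Sum>i<n. x (Suc i) - x i))"
    by (intro convergent_add convergent_const)
  then show ?thesis by (simp add: sum_lessThan_telescope)
qed

lemma sup_norm_contraction_iterates_converge:
  assumes F: "sup_norm_lipschitz c F" and c: "0 \<le> c" "c < 1"
  obtains V where "\<And>n. sup_norm (V - (F ^^ n) V0) \<le> c ^ n * sup_norm (F V0 - V0) / (1 - c)"
proof -
  define x where "x n = (F ^^ n) V0" for n
  define D where "D = sup_norm (F V0 - V0)"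
  have x_dist: "(1 - c) * \<bar>x (k + n) s - x n s\<bar> \<le> c ^ n * D" for n k s
  proof -
    have "x (k + n) = (F ^^ n) ((F ^^ k) V0)"
      unfolding x_def by (metis add.commute funpow_add comp_apply)
    then have "(1 - c) * \<bar>x (k + n) s - x n s\<bar> \<le> (1 - c) * sup_norm ((F ^^ n) ((F ^^ k) V0) - (F ^^ n) V0)"
      using abs_diff_le_sup_norm c by (simp add: x_def mult_left_mono)
    also have "\<dots> \<le> (1 - c) * (c ^ n * sup_norm ((F ^^ k) V0 - V0))"
      using sup_norm_lipschitz_funpow[OF F c(1)] c by (intro mult_left_mono sup_norm_lipschitzD) auto
    also have "\<dots> = c ^ n * ((1 - c) * sup_norm ((F ^^ k) V0 - V0))"
      by simp
    also have "\<dots> \<le> c ^ n * D"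
      unfolding D_def using sup_norm_lipschitz_funpow_displacement[OF F c] c
      by (intro mult_left_mono) auto
    finally show ?thesis .
  qed
  have "\<bar>x (Suc n) s - x n s\<bar> \<le> D / (1 - c) * c ^ n" for n s
    using x_dist[of 1 n s] c by (simp add: pos_le_divide_eq mult.commute)
  then have "convergent (\<lambda>n. x n s)" for s
    by (rule convergent_geometric_increments[OF _ c])
  then obtain V where V: "\<And>s. (\<lambda>n. x n s) \<longlonglongrightarrow> V s"
    unfolding convergent_def by metis
  have "(1 - c) * \<bar>V s - x n s\<bar> \<le> c ^ n * D" for n s
  proof (rule LIMSEQ_le_const2)
    show "(\<lambda>k. (1 - c) * \<bar>x (k + n) s - x n s\<bar>) \<longlonglongrightarrow> (1 - c) * \<bar>V s - x n s\<bar>"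
      by (intro tendsto_intros LIMSEQ_ignore_initial_segment V)
  qed (use x_dist in blast)
  then have "sup_norm (V - x n) \<le> c ^ n * D / (1 - c)" for n
    using c by (intro sup_norm_leI) (simp add: pos_le_divide_eq mult.commute)
  then show ?thesis using that unfolding x_def D_def by blast
qed

lemma sup_norm_contraction_fixpoint_unique:
  assumes F: "sup_norm_lipschitz c F" and c: "c < 1" and "F V = V" "F W = W"
  shows "V = W"
proof -
  have "(1 - c) * sup_norm (V - W) \<le> 0"
    using sup_norm_lipschitz_fixpoint_dist[OF F assms(3), of W] assms(4) by (simp add: sup_norm_def)
  then have "sup_norm (V - W) \<le> 0"
    using c by (simp add: mult_le_0_iff)
  then show ?thesis by (rule sup_norm_le_0_imp_eq)
qed

lemma sup_norm_contraction_ex1_fixpoint: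
  assumes F: "sup_norm_lipschitz c F" and c: "0 \<le> c" "c < 1"
  shows "\<exists>!V. F V = V"
proof -
  define K where "K = sup_norm (F (\<lambda>_. 0) - (\<lambda>_. 0)) / (1 - c)"
  obtain V where V: "\<And>n. sup_norm (V - (F ^^ n) (\<lambda>_. 0)) \<le> c ^ n * K"
    using sup_norm_contraction_iterates_converge[OF F c] unfolding K_def by (metis times_divide_eq_right)
  have "sup_norm (F V - V) \<le> 2 * K * c ^ Suc n" for n
  proof -
    have "sup_norm (F V - V)
        \<le> sup_norm (F V - F ((F ^^ n) (\<lambda>_. 0))) + sup_norm ((F ^^ Suc n) (\<lambda>_. 0) - V)"
      using sup_norm_triangle by simp
    also have "\<dots> \<le> c * (c ^ n * K) + c ^ Suc n * K"
    proof (rule add_mono)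
      show "sup_norm (F V - F ((F ^^ n) (\<lambda>_. 0))) \<le> c * (c ^ n * K)"
        using sup_norm_lipschitzD[OF F] mult_left_mono[OF V c(1)] by (rule order_trans)
      show "sup_norm ((F ^^ Suc n) (\<lambda>_. 0) - V) \<le> c ^ Suc n * K"
        using V[of "Suc n"] by (simp only: sup_norm_minus_commute)
    qed
    finally show ?thesis by simp
  qed
  moreover have "(\<lambda>n. 2 * K * c ^ Suc n) \<longlonglongrightarrow> 0"
    using c by (intro tendsto_mult_right_zero LIMSEQ_Suc LIMSEQ_power_zero) simp
  ultimately have "sup_norm (F V - V) \<le> 0"
    by (intro LIMSEQ_le_const) auto
  then have "F V = V" by (rule sup_norm_le_0_imp_eq)
  then show ?thesis
    using sup_norm_contraction_fixpoint_unique[OF F c(2)] by blast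
qed

lemma sup_norm_contraction_subsolution_le_fixpoint:
  assumes F: "sup_norm_lipschitz c F" and c: "0 \<le> c" "c < 1"
    and mono: "mono F" and fixpoint: "F Vs = Vs" and sub: "V \<le> F V"
  shows "V \<le> Vs"
proof (rule le_funI)
  fix s
  have V_le_iterate: "V \<le> (F ^^ n) V" for n
  proof (induction n)
    case (Suc n)
    have "F V \<le> F ((F ^^ n) V)" using mono Suc by (rule monoD)
    then show ?case using sub by simp
  qed simp
  have "V s - Vs s \<le> c ^ n * sup_norm (V - Vs)" for n
  proof -
    have "(F ^^ n) Vs = Vs"
      by (induction n) (simp_all add: fixpoint)
    then have "V s - Vs s \<le> (F ^^ n) V s - (F ^^ n) Vs s"
      using le_funD[OF V_le_iterate[of n], of s] by simp
    also have "\<dots> \<le> sup_norm ((F ^^ n) V - (F ^^ n) Vs)"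
      by (rule order_trans[OF abs_ge_self abs_diff_le_sup_norm])
    also have "\<dots> \<le> c ^ n * sup_norm (V - Vs)"
      by (rule sup_norm_lipschitzD[OF sup_norm_lipschitz_funpow[OF F c(1)]])
    finally show ?thesis .
  qed
  moreover have "(\<lambda>n. c ^ n * sup_norm (V - Vs)) \<longlonglongrightarrow> 0"
    using c by (intro tendsto_mult_left_zero LIMSEQ_power_zero) simp
  ultimately have "V s - Vs s \<le> 0"
    by (intro LIMSEQ_le_const) auto
  then show "V s \<le> Vs s" by simp
qed

section \<open>The Bellman and clipping operators\<close>

lemma abs_convex_sum_le:
  fixes w f :: "'a \<Rightarrow> real"
  assumes "finite A" "\<And>a. a \<in> A \<Longrightarrow> 0 \<le> w a" "(\<Sum>a\<in>A. w a) = 1" "\<And>a. a \<in> A \<Longrightarrow> \<bar>f a\<bar> \<le> B"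
  shows "\<bar>\<Sum>a\<in>A. w a * f a\<bar> \<le> B"
proof -
  have "\<bar>\<Sum>a\<in>A. w a * f a\<bar> \<le> (\<Sum>a\<in>A. w a * B)"
    using assms(2,4) by (intro order_trans[OF sum_abs] sum_mono) (simp add: abs_mult mult_left_mono)
  also have "\<dots> = B"
    using assms(3) by (simp flip: sum_distrib_right)
  finally show ?thesis .
qed

lemma Pv_diff_le:
  assumes "stochastic_kernel P"
  shows "\<bar>Pv P s a V - Pv P s a W\<bar> \<le> sup_norm (V - W)"
proof -
  have "Pv P s a V - Pv P s a W = (\<Sum>s'\<in>UNIV. P s a s' * (V s' - W s'))"
    by (simp add: Pv_def sum_subtractf algebra_simps)
  also have "\<bar>\<dots>\<bar> \<le> sup_norm (V - W)"
    using assms abs_diff_le_sup_norm[of V _ W] by (intro abs_convex_sum_le) (auto simp: stochastic_kernel_def)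
  finally show ?thesis .
qed

lemma Pv_mono:
  assumes "stochastic_kernel P" "V \<le> W"
  shows "Pv P s a V \<le> Pv P s a W"
  using assms unfolding Pv_def stochastic_kernel_def le_fun_def
  by (auto intro!: sum_mono mult_left_mono)

lemma bellman_ge: "r s a + \<gamma> * Pv P s a V \<le> bellman P r \<gamma> V s"
  unfolding bellman_def by (rule Max_ge) auto

lemma bellman_attained: "\<exists>a. bellman P r \<gamma> V s = r s a + \<gamma> * Pv P s a V"
  unfolding bellman_def using Max_in[of "range (\<lambda>a. r s a + \<gamma> * Pv P s a V)"] by fastforce

lemma bellman_sup_norm_lipschitz:
  assumes "stochastic_kernel P" "0 \<le> \<gamma>"
  shows "sup_norm_lipschitz \<gamma> (bellman P r \<gamma>)"
proof -
  have one_sided: "bellman P r \<gamma> V s \<le> bellman P r \<gamma> W s + \<gamma> * sup_norm (V - W)" for V W s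
  proof -
    obtain a where a: "bellman P r \<gamma> V s = r s a + \<gamma> * Pv P s a V"
      using bellman_attained by metis
    have "\<gamma> * Pv P s a V \<le> \<gamma> * Pv P s a W + \<gamma> * sup_norm (V - W)"
      using Pv_diff_le[OF assms(1), of s a V W] assms(2)
      by (simp add: abs_diff_le_iff mult_left_mono flip: distrib_left)
    then show ?thesis using a bellman_ge[of r s a \<gamma> P W] by linarith
  qed
  show ?thesis
    unfolding sup_norm_lipschitz_def
  proof (intro allI sup_norm_leI)
    fix V W s
    show "\<bar>(bellman P r \<gamma> V - bellman P r \<gamma> W) s\<bar> \<le> \<gamma> * sup_norm (V - W)"
      using one_sided[of V s W] one_sided[of W s V] sup_norm_minus_commute[of W V]
      unfolding abs_diff_le_iff by simp
  qed
qed

lemma mono_bellman: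
  fixes P :: "'s::finite \<Rightarrow> 'a::finite \<Rightarrow> 's \<Rightarrow> real"
  assumes "stochastic_kernel P" "0 \<le> \<gamma>"
  shows "mono (bellman P r \<gamma>)"
proof (intro monoI le_funI)
  fix V W :: "'s \<Rightarrow> real" and s assume "V \<le> W"
  obtain a where a: "bellman P r \<gamma> V s = r s a + \<gamma> * Pv P s a V"
    using bellman_attained by metis
  have "\<gamma> * Pv P s a V \<le> \<gamma> * Pv P s a W"
    using Pv_mono[OF assms(1) \<open>V \<le> W\<close>] assms(2) by (rule mult_left_mono)
  then show "bellman P r \<gamma> V s \<le> bellman P r \<gamma> W s"
    using a bellman_ge[of r s a \<gamma> P W] by linarith
qed

lemma Min_range_clip:
  assumes "0 \<le> M"
  shows "Min (range (clip M V)) = Min (range V)"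
proof (rule antisym)
  obtain s where s: "Min (range V) = V s" using Min_range_attained by blast
  then have "clip M V s = V s" using assms by (simp add: clip_def)
  then show "Min (range (clip M V)) \<le> Min (range V)"
    using s Min_range_le[of "clip M V" s] by simp
  show "Min (range V) \<le> Min (range (clip M V))"
    using Min_range_le[of V] assms by (simp add: Min_ge_iff clip_def)
qed

lemma sp_norm_clip_le:
  assumes "0 \<le> M"
  shows "sp_norm (clip M V) \<le> M"
proof -
  have "Max (range (clip M V)) \<le> M + Min (range V)"
    by (simp add: Max_le_iff clip_def)
  then show ?thesis
    unfolding sp_norm_def Min_range_clip[OF assms] by linarith
qed

lemma clip_eq_self:
  assumes "sp_norm V \<le> M"
  shows "clip M V = V"
proof
  fix s
  have "V s \<le> M + Min (range V)"
    using Max_range_ge[of V s] assms unfolding sp_norm_def by linarith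
  then show "clip M V s = V s"
    unfolding clip_def by simp
qed

lemma abs_min_diff_le:
  "\<bar>a - c\<bar> \<le> e \<Longrightarrow> \<bar>b - d\<bar> \<le> e \<Longrightarrow> \<bar>min a b - min c d\<bar> \<le> (e :: real)"
  unfolding min_def abs_le_iff by auto

lemma clip_sup_norm_lipschitz: "sup_norm_lipschitz 1 (clip M)"
proof -
  have "\<bar>min (V s) (M + Min (range V)) - min (W s) (M + Min (range W))\<bar> \<le> sup_norm (V - W)"
    for V W :: "'s::finite \<Rightarrow> real" and s
    using abs_diff_le_sup_norm[of V s W] Min_range_le_diff[of V W]
    by (intro abs_min_diff_le) simp_all
  then show ?thesis
    unfolding sup_norm_lipschitz_def clip_def by (auto intro!: sup_norm_leI)
qed

lemma mono_clip: "mono (clip M)"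
proof (intro monoI le_funI)
  fix V W :: "'s::finite \<Rightarrow> real" and s
  assume "V \<le> W"
  then show "clip M V s \<le> clip M W s"
    using Min_range_mono[of V W] le_funD[of V W s] unfolding clip_def by linarith
qed

lemma clip_bellman_sup_norm_lipschitz:
  assumes "stochastic_kernel P" "0 \<le> \<gamma>"
  shows "sup_norm_lipschitz \<gamma> (clip M \<circ> bellman P r \<gamma>)"
  using sup_norm_lipschitz_comp[OF clip_sup_norm_lipschitz bellman_sup_norm_lipschitz[OF assms]] by simp

lemma mono_clip_bellman:
  fixes P :: "'s::finite \<Rightarrow> 'a::finite \<Rightarrow> 's \<Rightarrow> real"
  assumes "stochastic_kernel P" "0 \<le> \<gamma>"
  shows "mono (clip M \<circ> bellman P r \<gamma>)"
proof (rule monoI)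
  fix V W :: "'s \<Rightarrow> real"
  assume "V \<le> W"
  then show "(clip M \<circ> bellman P r \<gamma>) V \<le> (clip M \<circ> bellman P r \<gamma>) W"
    using monoD[OF mono_clip monoD[OF mono_bellman[OF assms]]] by simp
qed

lemma sup_norm_clip_bellman_zero_le:
  assumes r: "\<forall>s a. 0 \<le> r s a \<and> r s a \<le> 1" and M: "0 \<le> M"
  shows "sup_norm (clip M (bellman P r \<gamma> (\<lambda>_. 0))) \<le> 1"
proof -
  let ?B = "bellman P r \<gamma> (\<lambda>_. 0)"
  have B: "0 \<le> ?B s \<and> ?B s \<le> 1" for s
    using bellman_attained[of P r \<gamma> "\<lambda>_. 0" s] r by (auto simp: Pv_def)
  have "0 \<le> Min (range ?B)"
    using B by (simp add: Min_ge_iff)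
  then show ?thesis
    using B M by (intro sup_norm_leI) (simp add: clip_def min_le_iff_disj)
qed

section \<open>Policy evaluation\<close>

definition policy_bellman ::
  "('s::finite \<Rightarrow> 'a::finite \<Rightarrow> 's \<Rightarrow> real) \<Rightarrow> ('s \<Rightarrow> 'a \<Rightarrow> real) \<Rightarrow> real \<Rightarrow> ('s \<Rightarrow> 'a \<Rightarrow> real)
    \<Rightarrow> ('s \<Rightarrow> real) \<Rightarrow> 's \<Rightarrow> real" where
  "policy_bellman P r \<gamma> pol V s = (\<Sum>a\<in>UNIV. pol s a * (r s a + \<gamma> * Pv P s a V))"

lemma is_policy_det_policy: "is_policy (det_policy d)"
  by (simp add: is_policy_def det_policy_def)

lemma sum_det_policy: "(\<Sum>a\<in>UNIV. det_policy (d :: 's \<Rightarrow> 'a::finite) s a * f a) = f (d s)"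
proof -
  have "(\<Sum>a\<in>UNIV. det_policy d s a * f a) = (\<Sum>a\<in>UNIV. if a = d s then f a else 0)"
    by (rule sum.cong) (auto simp: det_policy_def)
  then show ?thesis by simp
qed

lemma policy_bellman_det_policy:
  "policy_bellman P r \<gamma> (det_policy d) V s = r s (d s) + \<gamma> * Pv P s (d s) V"
  unfolding policy_bellman_def by (rule sum_det_policy)

lemma policy_bellman_le_bellman:
  assumes "is_policy pol" "\<forall>s a. r' s a \<le> r s a"
  shows "policy_bellman P r' \<gamma> pol V \<le> bellman P r \<gamma> V"
proof (rule le_funI)
  fix s
  have "r' s a + \<gamma> * Pv P s a V \<le> bellman P r \<gamma> V s" for a
    using assms(2) bellman_ge[of r s a \<gamma> P V] by (metis add_le_cancel_right order_trans)
  then have "policy_bellman P r' \<gamma> pol V s \<le> (\<Sum>a\<in>UNIV. pol s a * bellman P r \<gamma> V s)"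
    unfolding policy_bellman_def using assms(1)
    by (intro sum_mono mult_left_mono) (auto simp: is_policy_def)
  also have "\<dots> = bellman P r \<gamma> V s"
    using assms(1) by (simp add: is_policy_def flip: sum_distrib_right)
  finally show "policy_bellman P r' \<gamma> pol V s \<le> bellman P r \<gamma> V s" .
qed

lemma policy_bellman_sup_norm_lipschitz:
  assumes "stochastic_kernel P" "is_policy pol" "0 \<le> \<gamma>"
  shows "sup_norm_lipschitz \<gamma> (policy_bellman P r \<gamma> pol)"
  unfolding sup_norm_lipschitz_def
proof (intro allI sup_norm_leI)
  fix V W s
  have "(policy_bellman P r \<gamma> pol V - policy_bellman P r \<gamma> pol W) s
      = (\<Sum>a\<in>UNIV. pol s a * (\<gamma> * (Pv P s a V - Pv P s a W)))"
    by (simp add: policy_bellman_def algebra_simps flip: sum_subtractf)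
  also have "\<bar>\<dots>\<bar> \<le> \<gamma> * sup_norm (V - W)"
    using assms Pv_diff_le[OF assms(1)]
    by (intro abs_convex_sum_le) (auto simp: is_policy_def abs_mult mult_left_mono)
  finally show "\<bar>(policy_bellman P r \<gamma> pol V - policy_bellman P r \<gamma> pol W) s\<bar> \<le> \<gamma> * sup_norm (V - W)" .
qed

lemma exp_reward_abs_le:
  assumes P: "stochastic_kernel P" and pol: "is_policy pol" and r: "\<forall>s a. \<bar>r s a\<bar> \<le> B"
  shows "\<bar>exp_reward P pol r t s\<bar> \<le> B"
proof (induction t arbitrary: s)
  case 0
  show ?case
    using pol r by (simp add: is_policy_def abs_convex_sum_le)
next
  case (Suc t)
  have "\<bar>\<Sum>s'\<in>UNIV. P s a s' * exp_reward P pol r t s'\<bar> \<le> B" for a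
    using P Suc by (simp add: stochastic_kernel_def abs_convex_sum_le)
  then show ?case
    using pol by (simp add: is_policy_def abs_convex_sum_le)
qed

lemma policy_value_sums:
  assumes P: "stochastic_kernel P" and pol: "is_policy pol" and \<gamma>: "0 \<le> \<gamma>" "\<gamma> < 1"
  shows "(\<lambda>t. \<gamma> ^ t * exp_reward P pol r t s) sums policy_value P \<gamma> r pol s"
proof -
  define B where "B = Max (range (\<lambda>(s, a). \<bar>r s a\<bar>))"
  have "\<forall>s a. \<bar>r s a\<bar> \<le> B"
  proof (intro allI)
    fix s a
    show "\<bar>r s a\<bar> \<le> B"
      using Max_range_ge[of "\<lambda>(s, a). \<bar>r s a\<bar>" "(s, a)"] unfolding B_def by simp
  qed
  then have "norm (\<gamma> ^ t * exp_reward P pol r t s) \<le> B * \<gamma> ^ t" for t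
    using mult_right_mono[OF exp_reward_abs_le[OF P pol], of r B "\<gamma> ^ t" t s] \<gamma>
    by (simp add: abs_mult mult.commute)
  moreover have "summable (\<lambda>t. B * \<gamma> ^ t)"
    using \<gamma> by (intro summable_mult summable_geometric) simp
  ultimately have "summable (\<lambda>t. \<gamma> ^ t * exp_reward P pol r t s)"
    by (rule summable_comparison_test'[rotated])
  then show ?thesis
    unfolding policy_value_def by (rule summable_sums)
qed

lemma policy_bellman_policy_value:
  assumes P: "stochastic_kernel P" and pol: "is_policy pol" and \<gamma>: "0 \<le> \<gamma>" "\<gamma> < 1"
  shows "policy_bellman P r \<gamma> pol (policy_value P \<gamma> r pol) = policy_value P \<gamma> r pol"
proof
  fix s
  let ?e = "exp_reward P pol r" and ?v = "policy_value P \<gamma> r pol"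
  have "(\<lambda>t. \<Sum>a\<in>UNIV. pol s a * (\<gamma> * (\<Sum>s'\<in>UNIV. P s a s' * (\<gamma> ^ t * ?e t s'))))
      sums (\<Sum>a\<in>UNIV. pol s a * (\<gamma> * Pv P s a ?v))"
    unfolding Pv_def by (intro sums_sum sums_mult policy_value_sums[OF P pol \<gamma>])
  moreover have "(\<Sum>a\<in>UNIV. pol s a * (\<gamma> * (\<Sum>s'\<in>UNIV. P s a s' * (\<gamma> ^ t * ?e t s'))))
      = \<gamma> ^ Suc t * ?e (Suc t) s" for t
    by (simp add: sum_distrib_left mult_ac)
  ultimately have "(\<lambda>t. \<gamma> ^ t * ?e t s) sums ((\<Sum>a\<in>UNIV. pol s a * (\<gamma> * Pv P s a ?v)) + ?e 0 s)"
    using sums_Suc_iff[of "\<lambda>t. \<gamma> ^ t * ?e t s"] by simp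
  then have "?v s = (\<Sum>a\<in>UNIV. pol s a * (\<gamma> * Pv P s a ?v)) + ?e 0 s"
    using policy_value_sums[OF P pol \<gamma>] sums_unique2 by blast
  then show "policy_bellman P r \<gamma> pol ?v s = ?v s"
    by (simp add: policy_bellman_def distrib_left sum.distrib)
qed

lemma exp_reward_mono_reward:
  assumes P: "stochastic_kernel P" and pol: "is_policy pol" and r: "\<forall>s a. r s a \<le> r' s a"
  shows "exp_reward P pol r t s \<le> exp_reward P pol r' t s"
proof (induction t arbitrary: s)
  case 0
  show ?case using pol r by (auto simp: is_policy_def intro!: sum_mono mult_left_mono)
next
  case (Suc t)
  then show ?case
    using P pol by (auto simp: stochastic_kernel_def is_policy_def intro!: sum_mono mult_left_mono)
qed

lemma policy_value_mono_reward:
  assumes P: "stochastic_kernel P" and pol: "is_policy pol" and \<gamma>: "0 \<le> \<gamma>" "\<gamma> < 1"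
    and r: "\<forall>s a. r s a \<le> r' s a"
  shows "policy_value P \<gamma> r pol \<le> policy_value P \<gamma> r' pol"
proof (rule le_funI)
  fix s
  show "policy_value P \<gamma> r pol s \<le> policy_value P \<gamma> r' pol s"
    using exp_reward_mono_reward[OF P pol r] \<gamma>
    by (intro sums_le[OF _ policy_value_sums[OF P pol \<gamma>] policy_value_sums[OF P pol \<gamma>]])
      (simp add: mult_left_mono)
qed

section \<open>Span-constrained planning\<close>

lemma power_horizon_le_inverse:
  fixes \<gamma> q :: real
  assumes \<gamma>: "0 < \<gamma>" "\<gamma> < 1" and q: "0 < q"
  shows "\<gamma> ^ nat \<lceil>ln q / (1 - \<gamma>)\<rceil> \<le> 1 / q"
proof -
  define T where "T = nat \<lceil>ln q / (1 - \<gamma>)\<rceil>"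
  have "ln q \<le> real T * (1 - \<gamma>)"
    using real_nat_ceiling_ge[of "ln q / (1 - \<gamma>)"] \<gamma> by (simp add: T_def pos_divide_le_eq)
  moreover have "real T * ln \<gamma> \<le> real T * (\<gamma> - 1)"
    using ln_le_minus_one[OF \<gamma>(1)] by (intro mult_left_mono) auto
  ultimately have "real T * ln \<gamma> \<le> - ln q"
    by (simp add: algebra_simps)
  then have "\<gamma> ^ T \<le> exp (- ln q)"
    using \<gamma> by (simp add: powr_realpow[symmetric] powr_def)
  then show ?thesis
    using q by (simp add: T_def exp_minus inverse_eq_divide)
qed

definition is_greedy ::
  "('s::finite \<Rightarrow> 'a::finite \<Rightarrow> 's \<Rightarrow> real) \<Rightarrow> ('s \<Rightarrow> 'a \<Rightarrow> real) \<Rightarrow> real \<Rightarrow> ('s \<Rightarrow> real) \<Rightarrow> ('s \<Rightarrow> 'a) \<Rightarrow> bool" where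
  "is_greedy P r \<gamma> V d \<longleftrightarrow> (\<forall>s a. r s a + \<gamma> * Pv P s a V \<le> r s (d s) + \<gamma> * Pv P s (d s) V)"

definition span_truncated_reward ::
  "('s::finite \<Rightarrow> 'a::finite \<Rightarrow> 's \<Rightarrow> real) \<Rightarrow> ('s \<Rightarrow> 'a \<Rightarrow> real) \<Rightarrow> real \<Rightarrow> real \<Rightarrow> ('s \<Rightarrow> real)
    \<Rightarrow> 's \<Rightarrow> 'a \<Rightarrow> real" where
  "span_truncated_reward P r \<gamma> M V s a = min (Min (range V) + M - \<gamma> * Pv P s a V) (r s a)"

lemma bellman_greedy:
  "is_greedy P r \<gamma> V d \<Longrightarrow> bellman P r \<gamma> V s = r s (d s) + \<gamma> * Pv P s (d s) V"
  using bellman_attained[of P r \<gamma> V s] bellman_ge[of r s "d s" \<gamma> P V]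
  unfolding is_greedy_def by (metis order_antisym)

text \<open>Along a greedy policy the truncated reward reproduces the clipped Bellman operator, except
  that it clips relative to the minimum of \<open>V\<close> instead of that of \<open>bellman P r \<gamma> V\<close>; these
  minima differ by at most the residual of \<open>V\<close>.\<close>
lemma truncated_greedy_residual_le:
  assumes M: "0 \<le> M" and greedy: "is_greedy P r \<gamma> V d"
  shows "sup_norm (policy_bellman P (span_truncated_reward P r \<gamma> M V) \<gamma> (det_policy d) V - V)
    \<le> 2 * sup_norm (clip M (bellman P r \<gamma> V) - V)"
proof (rule sup_norm_leI)
  fix s
  let ?B = "bellman P r \<gamma> V" and ?G = "policy_bellman P (span_truncated_reward P r \<gamma> M V) \<gamma> (det_policy d) V"
  let ?\<delta> = "sup_norm (clip M ?B - V)"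
  have G: "?G s = min (?B s) (M + Min (range V))"
    by (simp add: policy_bellman_det_policy span_truncated_reward_def bellman_greedy[OF greedy]
        min_add_distrib_right min.commute add.commute)
  have "\<bar>Min (range V) - Min (range ?B)\<bar> \<le> ?\<delta>"
    using Min_range_le_diff[of V "clip M ?B"] Min_range_clip[OF M] sup_norm_minus_commute by metis
  then have "\<bar>?G s - clip M ?B s\<bar> \<le> ?\<delta>"
    unfolding G clip_def by (intro abs_min_diff_le) simp_all
  then show "\<bar>(?G - V) s\<bar> \<le> 2 * ?\<delta>"
    using abs_diff_le_sup_norm[of "clip M ?B" s V] by simp
qed

lemma truncated_greedy_policy_value_dist:
  assumes P: "stochastic_kernel P" and \<gamma>: "0 \<le> \<gamma>" "\<gamma> < 1"
    and M: "0 \<le> M" and greedy: "is_greedy P r \<gamma> V d"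
  shows "(1 - \<gamma>) * sup_norm (policy_value P \<gamma> (span_truncated_reward P r \<gamma> M V) (det_policy d) - V)
    \<le> 2 * sup_norm (clip M (bellman P r \<gamma> V) - V)"
  using sup_norm_lipschitz_fixpoint_dist[OF
      policy_bellman_sup_norm_lipschitz[OF P is_policy_det_policy \<gamma>(1)]
      policy_bellman_policy_value[OF P is_policy_det_policy \<gamma>]]
    truncated_greedy_residual_le[OF M greedy]
  by (rule order_trans)

lemma policy_value_le_clip_bellman_fixpoint:
  assumes P: "stochastic_kernel P" and \<gamma>: "0 \<le> \<gamma>" "\<gamma> < 1"
    and fixpoint: "clip M (bellman P r \<gamma> Vs) = Vs"
    and pol: "is_policy pol" and r': "\<forall>s a. r' s a \<le> r s a"
    and span: "sp_norm (policy_value P \<gamma> r' pol) \<le> M"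
  shows "policy_value P \<gamma> r' pol \<le> Vs"
proof (rule sup_norm_contraction_subsolution_le_fixpoint[OF
      clip_bellman_sup_norm_lipschitz[OF P \<gamma>(1)] \<gamma> mono_clip_bellman[OF P \<gamma>(1)]])
  let ?V = "policy_value P \<gamma> r' pol"
  show "(clip M \<circ> bellman P r \<gamma>) Vs = Vs"
    using fixpoint by simp
  have "?V = policy_bellman P r' \<gamma> pol ?V"
    using policy_bellman_policy_value[OF P pol \<gamma>] by simp
  also have "\<dots> \<le> bellman P r \<gamma> ?V"
    by (rule policy_bellman_le_bellman[OF pol r'])
  finally have "clip M ?V \<le> clip M (bellman P r \<gamma> ?V)"
    by (rule monoD[OF mono_clip])
  then show "?V \<le> (clip M \<circ> bellman P r \<gamma>) ?V"
    using clip_eq_self[OF span] by simp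
qed

lemma clip_bellman_iterate_residual_le:
  assumes P: "stochastic_kernel P" and r: "\<forall>s a. 0 \<le> r s a \<and> r s a \<le> 1"
    and \<gamma>: "0 \<le> \<gamma>" and M: "0 \<le> M"
  shows "sup_norm ((clip M \<circ> bellman P r \<gamma>) (((clip M \<circ> bellman P r \<gamma>) ^^ n) (\<lambda>_. 0))
      - ((clip M \<circ> bellman P r \<gamma>) ^^ n) (\<lambda>_. 0)) \<le> \<gamma> ^ n"
proof -
  let ?F = "clip M \<circ> bellman P r \<gamma>"
  have "sup_norm ((?F ^^ n) (?F (\<lambda>_. 0)) - (?F ^^ n) (\<lambda>_. 0)) \<le> \<gamma> ^ n * sup_norm (?F (\<lambda>_. 0) - (\<lambda>_. 0))"
    using sup_norm_lipschitz_funpow[OF clip_bellman_sup_norm_lipschitz[OF P \<gamma>] \<gamma>]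
    by (rule sup_norm_lipschitzD)
  also have "\<dots> \<le> \<gamma> ^ n"
    using sup_norm_clip_bellman_zero_le[OF r M] \<gamma> by (simp add: fun_diff_def mult_left_le)
  finally show ?thesis by (simp only: funpow_swap1)
qed

lemma span_constrained_planning_bounds:
  assumes P: "stochastic_kernel P" and \<gamma>: "0 \<le> \<gamma>" "\<gamma> < 1" and M: "0 \<le> M"
    and fixpoint: "clip M (bellman P r \<gamma> Vs) = Vs" and greedy: "is_greedy P r \<gamma> V d"
    and residual: "3 * sup_norm (clip M (bellman P r \<gamma> V) - V) \<le> (1 - \<gamma>) * \<epsilon>"
  defines "W \<equiv> policy_value P \<gamma> (span_truncated_reward P r \<gamma> M V) (det_policy d)"
  shows "sup_norm (V - Vs) \<le> \<epsilon>" and "sup_norm (W - Vs) \<le> \<epsilon>" and "sp_norm W \<le> M + 2 * \<epsilon>"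
proof -
  let ?\<delta> = "sup_norm (clip M (bellman P r \<gamma> V) - V)"
  have "(clip M \<circ> bellman P r \<gamma>) Vs = Vs"
    using fixpoint by simp
  then have V: "(1 - \<gamma>) * sup_norm (V - Vs) \<le> ?\<delta>"
    using sup_norm_lipschitz_fixpoint_dist[OF clip_bellman_sup_norm_lipschitz[OF P \<gamma>(1)]]
      sup_norm_minus_commute[of V Vs] by simp
  have "(1 - \<gamma>) * sup_norm (V - Vs) \<le> (1 - \<gamma>) * \<epsilon>"
    using V residual sup_norm_nonneg[of "clip M (bellman P r \<gamma> V) - V"] by linarith
  then show "sup_norm (V - Vs) \<le> \<epsilon>"
    using \<gamma> by simp
  have "(1 - \<gamma>) * sup_norm (W - Vs) \<le> (1 - \<gamma>) * sup_norm (W - V) + (1 - \<gamma>) * sup_norm (V - Vs)"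
    using sup_norm_triangle[of W Vs V] \<gamma> by (simp flip: distrib_left)
  also have "\<dots> \<le> (1 - \<gamma>) * \<epsilon>"
    using V truncated_greedy_policy_value_dist[OF P \<gamma> M greedy] residual unfolding W_def by linarith
  finally show W: "sup_norm (W - Vs) \<le> \<epsilon>"
    using \<gamma> by simp
  show "sp_norm W \<le> M + 2 * \<epsilon>"
    using sp_norm_le_diff[of W Vs] sp_norm_clip_le[OF M, of "bellman P r \<gamma> Vs"] fixpoint W by simp
qed

theorem lemma3:
  fixes P :: "'s::finite \<Rightarrow> 'a::finite \<Rightarrow> 's \<Rightarrow> real"
    and r :: "'s \<Rightarrow> 'a \<Rightarrow> real"
    and \<gamma> M \<epsilon> :: real
    and T :: nat
    and VT :: "'s \<Rightarrow> real"
    and \<pi>hat :: "'s \<Rightarrow> 'a"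
    and m :: real
    and rt :: "'s \<Rightarrow> 'a \<Rightarrow> real"
  assumes P: "stochastic_kernel P"
    and r_range: "\<forall>s a. 0 \<le> r s a \<and> r s a \<le> 1"
    and \<gamma>: "0 < \<gamma>" "\<gamma> < 1"
    and M: "M > 0"
    and \<epsilon>: "\<epsilon> > 0"
    and T_def: "T = nat \<lceil>ln (3 / ((1 - \<gamma>)^2 * \<epsilon>)) / (1 - \<gamma>)\<rceil>"
    and VT_def: "VT = ((clip M \<circ> bellman P r \<gamma>) ^^ T) (\<lambda>_. 0)"
    and \<pi>hat: "\<forall>s a. r s a + \<gamma> * Pv P s a VT \<le> r s (\<pi>hat s) + \<gamma> * Pv P s (\<pi>hat s) VT"
    and m_def: "m = Min (range VT)"
    and rt_def: "rt = (\<lambda>s a. min (m + M - \<gamma> * Pv P s a VT) (r s a))"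
  shows "(\<forall>V W. sup_norm (clip M (bellman P r \<gamma> V) - clip M (bellman P r \<gamma> W))
                  \<le> \<gamma> * sup_norm (V - W))
       \<and> (\<exists>!V. clip M (bellman P r \<gamma> V) = V)
       \<and> (\<forall>Vstar. clip M (bellman P r \<gamma> Vstar) = Vstar \<longrightarrow>
            sup_norm (VT - Vstar) \<le> \<epsilon>
          \<and> (\<forall>s a. rt s a \<le> r s a)
          \<and> sup_norm (policy_value P \<gamma> rt (det_policy \<pi>hat) - Vstar) \<le> \<epsilon>
          \<and> sp_norm (policy_value P \<gamma> rt (det_policy \<pi>hat)) \<le> M + 2 * \<epsilon>
          \<and> (\<forall>\<pi>' r'. is_policy \<pi>' \<longrightarrow> (\<forall>s a. r' s a \<le> r s a)
                \<longrightarrow> sp_norm (policy_value P \<gamma> r' \<pi>') \<le> M \<longrightarrow>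
                (\<forall>s. Vstar s \<ge> policy_value P \<gamma> r' \<pi>' s
                   \<and> policy_value P \<gamma> r (det_policy \<pi>hat) s \<ge> policy_value P \<gamma> rt (det_policy \<pi>hat) s
                   \<and> policy_value P \<gamma> rt (det_policy \<pi>hat) s \<ge> Vstar s - \<epsilon>
                   \<and> Vstar s - \<epsilon> \<ge> policy_value P \<gamma> r' \<pi>' s - \<epsilon>)))"
proof -
  have \<gamma>0: "0 \<le> \<gamma>" and M0: "0 \<le> M"
    using \<gamma> M by simp_all
  have contraction: "sup_norm_lipschitz \<gamma> (clip M \<circ> bellman P r \<gamma>)"
    by (rule clip_bellman_sup_norm_lipschitz[OF P \<gamma>0])
  have greedy: "is_greedy P r \<gamma> VT \<pi>hat"
    using \<pi>hat by (simp add: is_greedy_def)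
  have rt: "rt = span_truncated_reward P r \<gamma> M VT"
    by (simp add: rt_def m_def span_truncated_reward_def fun_eq_iff)
  have rt_le: "\<forall>s a. rt s a \<le> r s a"
    by (simp add: rt_def)
  have "\<gamma> ^ T \<le> (1 - \<gamma>)^2 * \<epsilon> / 3"
    using power_horizon_le_inverse[OF \<gamma>, of "3 / ((1 - \<gamma>)^2 * \<epsilon>)"] \<gamma> \<epsilon> T_def by simp
  also have "\<dots> \<le> (1 - \<gamma>) * \<epsilon> / 3"
    using \<gamma> \<epsilon> by (simp add: power2_eq_square mult_le_cancel_right1)
  finally have residual: "3 * sup_norm (clip M (bellman P r \<gamma> VT) - VT) \<le> (1 - \<gamma>) * \<epsilon>"
    using clip_bellman_iterate_residual_le[OF P r_range \<gamma>0 M0, of T] VT_def by simp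
  let ?W = "policy_value P \<gamma> rt (det_policy \<pi>hat)"
  note bounds = span_constrained_planning_bounds[OF P \<gamma>0 \<gamma>(2) M0 _ greedy residual, folded rt]
  have lower: "Vstar s - \<epsilon> \<le> ?W s" if "clip M (bellman P r \<gamma> Vstar) = Vstar" for Vstar s
    using abs_diff_le_sup_norm[of ?W s Vstar] bounds(2)[OF that] by linarith
  have "?W \<le> policy_value P \<gamma> r (det_policy \<pi>hat)"
    by (rule policy_value_mono_reward[OF P is_policy_det_policy \<gamma>0 \<gamma>(2) rt_le])
  then show ?thesis
    using sup_norm_contraction_ex1_fixpoint[OF contraction \<gamma>0 \<gamma>(2)] contraction rt_le bounds lower
      policy_value_le_clip_bellman_fixpoint[OF P \<gamma>0 \<gamma>(2)]
    by (simp add: sup_norm_lipschitz_def le_fun_def)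
qed

end
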